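(* Let $\mathbf{C}\in\mathbb{R}^{n\times n}$, $\mathbf{c}\in\mathbb{R}^n$, and consider the linear system $\mathbf{C}\mathbf{x}=\mathbf{c}$. Let $\langle\cdot,\cdot\rangle_1$, $\langle\cdot,\cdot\rangle_2$ be two inner products on $\mathbb{R}^n$ with norms $\|\cdot\|_1,\|\cdot\|_2$, and constants $0<\underline{\gamma}\le\overline{\gamma}$ with $\underline{\gamma}\|\mathbf{x}\|_1\le\|\mathbf{x}\|_2\le\overline{\gamma}\|\mathbf{x}\|_1$ for all $\mathbf{x}\in\mathbb{R}^n$. Fix an initial guess $\mathbf{x}^0$ with residual $\mathbf{r}^0=\mathbf{c}-\mathbf{C}\mathbf{x}^0$, and for $p=1,2$ and $m\ge0$ let $\mathbf{x}^m_p\in\mathbf{x}^0+\mathrm{span}\{\mathbf{r}^0,\mathbf{C}\mathbf{r}^0,\dots,\mathbf{C}^{m-1}\mathbf{r}^0\}$ minimise the residual norm $\|\mathbf{c}-\mathbf{C}\mathbf{x}\|_p$ over this affine Krylov space, with residual $\mathbf{r}^m_p=\mathbf{c}-\mathbf{C}\mathbf{x}^m_p$. Suppose that for some $0<\sigma<1$, $\|\mathbf{r}^m_1\|_1\le\sigma^m\|\mathbf{r}^0\|_1$ for all $m\ge0$. Then for all $m\ge0$, $$\|\mathbf{r}^{m+\Delta m}_2\|_2\le\sigma^m\|\mathbf{r}^0\|_2\quad\text{for all integers }\Delta m\ge\frac{\log(\overline{\gamma}/\underline{\gamma})}{\log(\sigma^{-1})}.$$ *)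

theory Defs
  imports "HOL-Analysis.Analysis"
begin

definition is_inner_product :: "(real^'n \<Rightarrow> real^'n \<Rightarrow> real) \<Rightarrow> bool" where
  "is_inner_product ip \<longleftrightarrow>
     (\<forall>x y. ip x y = ip y x) \<and>
     (\<forall>x y z. ip (x + y) z = ip x z + ip y z) \<and>
     (\<forall>a x y. ip (a *\<^sub>R x) y = a * ip x y) \<and>
     (\<forall>x. 0 \<le> ip x x) \<and>
     (\<forall>x. ip x x = 0 \<longrightarrow> x = 0)"

definition ip_norm :: "(real^'n \<Rightarrow> real^'n \<Rightarrow> real) \<Rightarrow> real^'n \<Rightarrow> real" where
  "ip_norm ip x = sqrt (ip x x)"

definition krylov :: "real^'n^'n \<Rightarrow> real^'n \<Rightarrow> nat \<Rightarrow> (real^'n) set" where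
  "krylov C r m = span {(((*v) C) ^^ k) r | k. k < m}"

definition is_min_res :: "(real^'n \<Rightarrow> real^'n \<Rightarrow> real) \<Rightarrow> real^'n^'n \<Rightarrow> real^'n \<Rightarrow> real^'n \<Rightarrow> nat \<Rightarrow> real^'n \<Rightarrow> bool" where
  "is_min_res ip C c x0 m x \<longleftrightarrow>
     x \<in> (\<lambda>v. x0 + v) ` krylov C (c - C *v x0) m \<and>
     (\<forall>y \<in> (\<lambda>v. x0 + v) ` krylov C (c - C *v x0) m.
        ip_norm ip (c - C *v x) \<le> ip_norm ip (c - C *v y))"

end

theory Submission
  imports Defs
begin

text \<open>Both minimisers at step \<open>m + \<Delta>m\<close> range over the same affine Krylov space, so the
  \<open>\<parallel>\<cdot>\<parallel>\<^sub>2\<close>-minimal residual is no longer in \<open>\<parallel>\<cdot>\<parallel>\<^sub>2\<close> than the \<open>\<parallel>\<cdot>\<parallel>\<^sub>1\<close>-minimal one.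
  Passing from \<open>\<parallel>\<cdot>\<parallel>\<^sub>2\<close> to \<open>\<parallel>\<cdot>\<parallel>\<^sub>1\<close> and back costs the factor \<open>\<overline>\<gamma>/\<underline>\<gamma>\<close>, and the
  lower bound on \<open>\<Delta>m\<close> is exactly what makes \<open>\<sigma>\<^sup>\<Delta>\<^sup>m\<close> absorb it.\<close>

lemma ip_norm_nonneg:
  assumes "is_inner_product ip"
  shows "0 \<le> ip_norm ip x"
  using assms unfolding is_inner_product_def ip_norm_def by simp

lemma is_min_res_le_residual:
  assumes "is_min_res ip C c x0 m x"
    and "y \<in> (\<lambda>v. x0 + v) ` krylov C (c - C *v x0) m"
  shows "ip_norm ip (c - C *v x) \<le> ip_norm ip (c - C *v y)"
  using assms unfolding is_min_res_def by blast

lemma is_min_res_in_affine_krylov: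
  assumes "is_min_res ip C c x0 m x"
  shows "x \<in> (\<lambda>v. x0 + v) ` krylov C (c - C *v x0) m"
  using assms unfolding is_min_res_def by blast

lemma power_le_quotient_if_ln_bound:
  fixes \<sigma> a b :: real
  assumes "0 < \<sigma>" "\<sigma> < 1" "0 < a" "0 < b"
    and "real d \<ge> ln (b / a) / ln (1 / \<sigma>)"
  shows "\<sigma> ^ d \<le> a / b"
proof -
  have "ln (1 / \<sigma>) > 0" using assms(1,2) by simp
  then have "ln (b / a) \<le> real d * ln (1 / \<sigma>)"
    using assms(5) by (simp add: divide_le_eq)
  also have "\<dots> = - ln (\<sigma> ^ d)"
    using assms(1) by (simp add: ln_realpow ln_div)
  finally have "ln (\<sigma> ^ d) \<le> ln (a / b)"
    using assms(3,4) by (simp add: ln_div)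
  then show ?thesis using assms(1,3,4) by simp
qed

lemma bound_transfer_equivalent_norms:
  fixes N N' :: "'a \<Rightarrow> real"
  assumes "0 < gl" "0 \<le> gu" "0 \<le> s"
    and "\<And>x. gl * N x \<le> N' x \<and> N' x \<le> gu * N x"
    and "N r \<le> s * N r0"
  shows "N' r \<le> s * (gu / gl) * N' r0"
proof -
  have "N' r \<le> gu * N r" using assms(4) by blast
  also have "\<dots> \<le> gu * (s * N r0)" using assms(2,5) by (rule mult_left_mono[rotated])
  also have "\<dots> \<le> gu * (s * (N' r0 / gl))"
  proof -
    have "N r0 \<le> N' r0 / gl"
      using assms(1) assms(4)[of r0] by (simp add: le_divide_eq mult.commute)
    then show ?thesis using assms(2,3) by (intro mult_left_mono) auto
  qed
  also have "\<dots> = s * (gu / gl) * N' r0" by simp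
  finally show ?thesis .
qed

theorem lemma4p3:
  fixes C :: "real^'n^'n" and c x0 :: "real^'n"
    and ip1 ip2 :: "real^'n \<Rightarrow> real^'n \<Rightarrow> real"
    and gl gu \<sigma> :: real
    and x1 x2 :: "nat \<Rightarrow> real^'n"
  assumes "is_inner_product ip1" and "is_inner_product ip2"
    and "0 < gl" and "gl \<le> gu"
    and "\<forall>x. gl * ip_norm ip1 x \<le> ip_norm ip2 x \<and> ip_norm ip2 x \<le> gu * ip_norm ip1 x"
    and "\<forall>m. is_min_res ip1 C c x0 m (x1 m)"
    and "\<forall>m. is_min_res ip2 C c x0 m (x2 m)"
    and "0 < \<sigma>" and "\<sigma> < 1"
    and "\<forall>m. ip_norm ip1 (c - C *v x1 m) \<le> \<sigma> ^ m * ip_norm ip1 (c - C *v x0)"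
  shows "\<forall>m dm. real dm \<ge> ln (gu / gl) / ln (1 / \<sigma>) \<longrightarrow>
           ip_norm ip2 (c - C *v x2 (m + dm)) \<le> \<sigma> ^ m * ip_norm ip2 (c - C *v x0)"
proof (intro allI impI)
  fix m dm :: nat
  assume dm: "real dm \<ge> ln (gu / gl) / ln (1 / \<sigma>)"
  let ?r = "\<lambda>x. c - C *v x"
  have "gu > 0" using assms(3,4) by linarith
  have contraction: "\<sigma> ^ dm \<le> gl / gu"
    using power_le_quotient_if_ln_bound[OF assms(8,9,3) \<open>gu > 0\<close> dm] .
  have "ip_norm ip2 (?r (x2 (m + dm))) \<le> ip_norm ip2 (?r (x1 (m + dm)))"
    using assms(6,7) by (meson is_min_res_in_affine_krylov is_min_res_le_residual)
  also have "\<dots> \<le> \<sigma> ^ (m + dm) * (gu / gl) * ip_norm ip2 (?r x0)"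
    using assms(3,5,8,10) \<open>gu > 0\<close>
    by (intro bound_transfer_equivalent_norms[where N = "ip_norm ip1"]) auto
  also have "\<dots> = \<sigma> ^ m * (\<sigma> ^ dm * (gu / gl) * ip_norm ip2 (?r x0))"
    by (simp add: power_add mult_ac)
  also have "\<dots> \<le> \<sigma> ^ m * ip_norm ip2 (?r x0)"
  proof (rule mult_left_mono)
    have "\<sigma> ^ dm * (gu / gl) \<le> 1"
      using contraction \<open>gu > 0\<close> assms(3) by (simp add: le_divide_eq)
    then show "\<sigma> ^ dm * (gu / gl) * ip_norm ip2 (?r x0) \<le> ip_norm ip2 (?r x0)"
      using assms(3,8) \<open>gu > 0\<close> by (intro mult_left_le_one_le ip_norm_nonneg[OF assms(2)]) auto
  qed (use assms(8) in simp)
  finally show "ip_norm ip2 (?r (x2 (m + dm))) \<le> \<sigma> ^ m * ip_norm ip2 (?r x0)" .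
qed

end
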